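(* Let $X$ be a complex vector space with $\dim_{\mathbb{C}}X\ge2$, $\Omega\subset X$ a polygonally connected $2$-open set, and $f\in\mathcal{H}_G(\Omega)$. If $|f|$ has a $\tau_{(1)}$-local minimum at $c\in\Omega$ and $f(c)\neq0$, then $f$ is constant.
   Context: $\Gamma_{1,d}(X)$: complex affine subspaces of $X$ of dimension $1,\dots,d$, with Euclidean topology. $A\subset X$ is $d$-open if $A\cap L$ is open in $L$ for all $L\in\Gamma_{1,d}(X)$. $\tau_{(1)}$: topology whose open sets are the $1$-open sets. Polygonally connected: any two points joined by a polygonal chain in the set. $\mathcal{H}_G(\Omega)$: maps $f:\Omega\to\mathbb{C}$ such that for all $a\in\Omega$, $v\in X$, $\lambda\mapsto f(a+\lambda v)$ is holomorphic on some disc around $0$. *)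

theory Defs
  imports "HOL-Analysis.Analysis"
begin

text \<open>X is modelled as a type 'a with a complex scalar multiplication sc
 satisfying the vector_space axioms. Complex affine lines and planes are
 parametrised by complex affine coordinates; their Euclidean topology is the one
 transported from the complex plane, resp. complex 2-space.\<close>

definition line_open :: "(complex \<Rightarrow> 'a \<Rightarrow> 'a::ab_group_add) \<Rightarrow> 'a set \<Rightarrow> bool" where
  "line_open sc A \<longleftrightarrow>
     (\<forall>a v. v \<noteq> 0 \<longrightarrow> open {z::complex. a + sc z v \<in> A})"

definition plane_open :: "(complex \<Rightarrow> 'a \<Rightarrow> 'a::ab_group_add) \<Rightarrow> 'a set \<Rightarrow> bool" where
  "plane_open sc A \<longleftrightarrow>
     (\<forall>a u v. u \<noteq> v \<and> \<not> module.dependent sc {u, v} \<longrightarrow>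
        open {p::complex \<times> complex. a + sc (fst p) u + sc (snd p) v \<in> A})"

definition one_open :: "(complex \<Rightarrow> 'a \<Rightarrow> 'a::ab_group_add) \<Rightarrow> 'a set \<Rightarrow> bool" where
  "one_open sc A \<longleftrightarrow> line_open sc A"

definition two_open :: "(complex \<Rightarrow> 'a \<Rightarrow> 'a::ab_group_add) \<Rightarrow> 'a set \<Rightarrow> bool" where
  "two_open sc A \<longleftrightarrow> line_open sc A \<and> plane_open sc A"

definition cseg :: "(complex \<Rightarrow> 'a \<Rightarrow> 'a::ab_group_add) \<Rightarrow> 'a \<Rightarrow> 'a \<Rightarrow> 'a set" where
  "cseg sc p q = {p + sc (complex_of_real t) (q - p) | t. 0 \<le> t \<and> t \<le> 1}"

definition polygonally_connected :: "(complex \<Rightarrow> 'a \<Rightarrow> 'a::ab_group_add) \<Rightarrow> 'a set \<Rightarrow> bool" where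
  "polygonally_connected sc S \<longleftrightarrow>
     (\<forall>x\<in>S. \<forall>y\<in>S. \<exists>ps::'a list. ps \<noteq> [] \<and> hd ps = x \<and> last ps = y \<and>
        (\<forall>i. Suc i < length ps \<longrightarrow> cseg sc (ps ! i) (ps ! Suc i) \<subseteq> S))"

definition G_holomorphic :: "(complex \<Rightarrow> 'a \<Rightarrow> 'a::ab_group_add) \<Rightarrow> 'a set \<Rightarrow> ('a \<Rightarrow> complex) \<Rightarrow> bool" where
  "G_holomorphic sc \<Omega> f \<longleftrightarrow>
     (\<forall>a\<in>\<Omega>. \<forall>v. \<exists>r>0. (\<lambda>z. f (a + sc z v)) holomorphic_on ball 0 r)"

definition tau1_local_min_abs :: "(complex \<Rightarrow> 'a \<Rightarrow> 'a::ab_group_add) \<Rightarrow> 'a set \<Rightarrow> ('a \<Rightarrow> complex) \<Rightarrow> 'a \<Rightarrow> bool" where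
  "tau1_local_min_abs sc \<Omega> f c \<longleftrightarrow>
     (\<exists>U. one_open sc U \<and> c \<in> U \<and> (\<forall>x\<in>U \<inter> \<Omega>. norm (f c) \<le> norm (f x)))"

end

theory Submission
  imports Defs "HOL-Complex_Analysis.Complex_Analysis"
begin

text \<open>At the minimum point c, the restriction of f to any complex line through c is a
  holomorphic function whose modulus has a local minimum at a non-zero value, so by the
  minimum modulus principle f is constant near c on every such line. This local property
  propagates along each segment [p, q] of \<Omega>: for a direction w and small t, the segment from
  p to q + t w still lies in \<Omega> (by compactness of [p, q] and 2-openness, which makes the
  preimage of \<Omega> in the complex plane spanned by q - p and w open), so analytic continuation
  on the line through p and q + t w carries the constant from p to q + t w. Polygonal
  connectedness finally reaches every point of \<Omega>.\<close>

lemma minimum_modulus_principle_ball: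
  fixes h :: "complex \<Rightarrow> complex"
  assumes hol: "h holomorphic_on ball z0 r" and nz: "h z0 \<noteq> 0"
    and min: "\<And>z. z \<in> ball z0 r \<Longrightarrow> norm (h z0) \<le> norm (h z)"
    and z: "z \<in> ball z0 r"
  shows "h z = h z0"
proof -
  have z0: "z0 \<in> ball z0 r"
    using z le_less_trans[OF zero_le_dist] by auto
  have hnz: "h z \<noteq> 0" if "z \<in> ball z0 r" for z
    using min[OF that] nz by auto
  have "(\<lambda>z. inverse (h z)) holomorphic_on ball z0 r"
    using hol hnz by (intro holomorphic_intros) auto
  then have "(\<lambda>z. inverse (h z)) constant_on ball z0 r"
  proof (rule maximum_modulus_principle[where U = "ball z0 r" and \<xi> = z0])
    show "norm (inverse (h z)) \<le> norm (inverse (h z0))" if "z \<in> ball z0 r" for z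
      using min[OF that] nz by (simp add: norm_inverse le_imp_inverse_le)
  qed (use z0 in auto)
  then obtain k where k: "\<And>z. z \<in> ball z0 r \<Longrightarrow> inverse (h z) = k"
    unfolding constant_on_def by blast
  show ?thesis
    using k[OF z] k[OF z0] by (metis inverse_eq_iff_eq)
qed

lemma closed_segment_subset_connected_component:
  fixes a b :: "'a::real_normed_vector"
  assumes "closed_segment a b \<subseteq> A"
  shows "b \<in> connected_component_set A a"
  using connected_component_maximal[OF ends_in_segment(1) connected_segment assms]
    ends_in_segment(2) by blast

lemma tube_around_unit_segment:
  fixes D :: "(complex \<times> complex) set"
  assumes "open D" and "\<And>z. z \<in> closed_segment 0 1 \<Longrightarrow> (z, 0) \<in> D"
  obtains e where "e > 0" and "\<And>t z. norm t < e \<Longrightarrow> z \<in> closed_segment 0 1 \<Longrightarrow> (z, z * t) \<in> D"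
proof -
  let ?K = "(\<lambda>z. (z, 0)) ` closed_segment 0 (1::complex)"
  have "compact ?K"
    by (intro compact_continuous_image continuous_intros) auto
  moreover have "?K \<subseteq> D"
    using assms(2) by auto
  ultimately obtain e where e: "e > 0" "(\<Union>x\<in>?K. ball x e) \<subseteq> D"
    by (rule compact_subset_open_imp_ball_epsilon_subset[OF _ assms(1)])
  have "(z, z * t) \<in> D" if t: "norm t < e" and z: "z \<in> closed_segment 0 1" for t z
  proof -
    have "norm z \<le> 1"
      using segment_bound1[OF z] by simp
    then have "norm (z * t) \<le> norm t"
      by (simp add: norm_mult mult_left_le_one_le)
    with t have "(z, z * t) \<in> ball (z, 0) e"
      by (simp add: dist_Pair_Pair dist_norm)
    moreover have "(z, 0) \<in> ?K"
      using z by (rule imageI)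
    ultimately show ?thesis
      using e(2) by blast
  qed
  with e(1) show ?thesis by (rule that)
qed

definition locally_constant_on_lines ::
    "(complex \<Rightarrow> 'a \<Rightarrow> 'a::ab_group_add) \<Rightarrow> ('a \<Rightarrow> complex) \<Rightarrow> complex \<Rightarrow> 'a \<Rightarrow> bool" where
  "locally_constant_on_lines sc f k p \<longleftrightarrow> (\<forall>v. \<forall>\<^sub>F z in nhds 0. f (p + sc z v) = k)"

context
  fixes sc :: "complex \<Rightarrow> 'a::ab_group_add \<Rightarrow> 'a"
  assumes vs: "vector_space sc"
begin

interpretation V: vector_space sc by (rule vs)

lemma line_open_imp_open_line_preimage:
  assumes "line_open sc \<Omega>"
  shows "open {z. a + sc z v \<in> \<Omega>}"
proof (cases "v = 0")
  case True
  then show ?thesis by (cases "a \<in> \<Omega>") auto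
next
  case False
  then show ?thesis using assms unfolding line_open_def by blast
qed

lemma two_open_imp_open_plane_preimage:
  assumes "two_open sc \<Omega>"
  shows "open {P. a + sc (fst P) u + sc (snd P) w \<in> \<Omega>}"
proof -
  have lo: "line_open sc \<Omega>" and po: "plane_open sc \<Omega>"
    using assms by (auto simp: two_open_def)
  \<comment> \<open>plane_open only speaks about independent pairs; otherwise the preimage is a
    cylinder over the preimage of a line.\<close>
  consider "u \<noteq> w \<and> \<not> V.dependent {u, w}" | "u = 0" | l where "w = sc l u"
  proof (cases "u = 0 \<or> (u \<noteq> w \<and> \<not> V.dependent {u, w})")
    case False
    have "w \<in> V.span {u}"
    proof (cases "u = w")
      case False
      then have "V.dependent (insert w {u})"
        using \<open>\<not> (u = 0 \<or> _)\<close> by (simp add: insert_commute)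
      then show ?thesis
        using False \<open>\<not> (u = 0 \<or> _)\<close> V.independent_insert[of w "{u}"] by simp
    qed (simp add: V.span_base)
    then obtain l where "w = sc l u"
      by (auto simp: V.span_singleton)
    then show ?thesis by (rule that(3))
  qed (use that(1,2) in blast)
  then show ?thesis
  proof cases
    case 1
    then show ?thesis using po unfolding plane_open_def by blast
  next
    case 2
    have "open (snd -` {z. a + sc z w \<in> \<Omega>})"
      by (intro open_vimage_snd line_open_imp_open_line_preimage lo)
    moreover have "{P. a + sc (fst P) u + sc (snd P) w \<in> \<Omega>} = snd -` {z. a + sc z w \<in> \<Omega>}"
      using 2 by auto
    ultimately show ?thesis by simp
  next
    case 3
    have "open ((\<lambda>P. fst P + snd P * l) -` {z. a + sc z u \<in> \<Omega>})"
      by (intro continuous_open_vimage line_open_imp_open_line_preimage lo continuous_intros)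
    moreover have "{P. a + sc (fst P) u + sc (snd P) w \<in> \<Omega>}
        = (\<lambda>P. fst P + snd P * l) -` {z. a + sc z u \<in> \<Omega>}"
      by (auto simp: 3 V.scale_left_distrib add.assoc)
    ultimately show ?thesis by simp
  qed
qed

lemma locally_constant_on_lines_imp_eq:
  assumes "locally_constant_on_lines sc f k p"
  shows "f p = k"
proof -
  have "\<forall>\<^sub>F z in nhds 0. f (p + sc z 0) = k"
    using assms unfolding locally_constant_on_lines_def by blast
  then show ?thesis
    using eventually_nhds_x_imp_x by fastforce
qed

lemma G_holomorphic_on_line:
  assumes "G_holomorphic sc \<Omega> f"
  shows "(\<lambda>z. f (p + sc z v)) holomorphic_on {z. p + sc z v \<in> \<Omega>}"
  unfolding holomorphic_on_def
proof
  fix z0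
  assume "z0 \<in> {z. p + sc z v \<in> \<Omega>}"
  then obtain r where r: "r > 0"
    and hol: "(\<lambda>z. f (p + sc z0 v + sc z v)) holomorphic_on ball 0 r"
    using assms unfolding G_holomorphic_def by blast
  have "(\<lambda>z. z - z0) ` ball z0 r \<subseteq> ball 0 r"
    by (auto simp: dist_norm norm_minus_commute)
  then have "(\<lambda>z. f (p + sc z0 v + sc (z - z0) v)) holomorphic_on ball z0 r"
    using holomorphic_on_compose_gen[OF _ hol] by (simp add: o_def holomorphic_intros)
  then have "(\<lambda>z. f (p + sc z0 v + sc (z - z0) v)) field_differentiable at z0"
    using holomorphic_on_imp_differentiable_at r by auto
  moreover have "p + sc z0 v + sc (z - z0) v = p + sc z v" for z
    by (simp add: V.scale_left_diff_distrib)
  ultimately show "(\<lambda>z. f (p + sc z v)) field_differentiable at z0 within {z. p + sc z v \<in> \<Omega>}"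
    by (simp add: field_differentiable_at_within)
qed

lemma G_holomorphic_constant_on_line_component:
  assumes lo: "line_open sc \<Omega>" and G: "G_holomorphic sc \<Omega> f"
    and near: "\<forall>\<^sub>F z in nhds 0. f (p + sc z v) = k"
    and z: "z \<in> connected_component_set {z. p + sc z v \<in> \<Omega>} 0"
  shows "f (p + sc z v) = k"
proof -
  let ?S = "connected_component_set {z. p + sc z v \<in> \<Omega>} 0"
  have "open ?S"
    by (intro open_connected_component line_open_imp_open_line_preimage lo)
  obtain T where T: "open T" "0 \<in> T" "\<And>z. z \<in> T \<Longrightarrow> f (p + sc z v) = k"
    using near unfolding eventually_nhds by blast
  have "0 \<in> ?S"
    using connected_component_in[of "{z. p + sc z v \<in> \<Omega>}" 0 z] z by simp
  show ?thesis
  proof (rule analytic_continuation_open[where s = "T \<inter> ?S" and s' = ?S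
        and f = "\<lambda>z. f (p + sc z v)" and g = "\<lambda>_. k"])
    show "(\<lambda>z. f (p + sc z v)) holomorphic_on ?S"
      by (rule holomorphic_on_subset[OF G_holomorphic_on_line[OF G] connected_component_subset])
  qed (use T \<open>open ?S\<close> \<open>0 \<in> ?S\<close> z in auto)
qed

lemma tau1_local_min_imp_locally_constant_on_lines:
  assumes lo: "line_open sc \<Omega>" and G: "G_holomorphic sc \<Omega> f" and c: "c \<in> \<Omega>"
    and min: "tau1_local_min_abs sc \<Omega> f c" and nz: "f c \<noteq> 0"
  shows "locally_constant_on_lines sc f (f c) c"
  unfolding locally_constant_on_lines_def
proof
  fix v
  obtain U where U: "one_open sc U" "c \<in> U" "\<And>x. x \<in> U \<inter> \<Omega> \<Longrightarrow> norm (f c) \<le> norm (f x)"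
    using min unfolding tau1_local_min_abs_def by blast
  let ?W = "{z. c + sc z v \<in> \<Omega>} \<inter> {z. c + sc z v \<in> U}"
  have "open ?W"
    using U(1) lo unfolding one_open_def by (intro open_Int line_open_imp_open_line_preimage)
  moreover have "0 \<in> ?W"
    using c U(2) by simp
  ultimately obtain r where r: "r > 0" "ball 0 r \<subseteq> ?W"
    using open_contains_ball by blast
  have "f (c + sc z v) = f (c + sc 0 v)" if "z \<in> ball 0 r" for z
  proof (rule minimum_modulus_principle_ball[OF _ _ _ that])
    show "(\<lambda>z. f (c + sc z v)) holomorphic_on ball 0 r"
      by (rule holomorphic_on_subset[OF G_holomorphic_on_line[OF G]]) (use r(2) in auto)
    show "norm (f (c + sc 0 v)) \<le> norm (f (c + sc z v))" if "z \<in> ball 0 r" for z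
    proof -
      have "c + sc z v \<in> U \<inter> \<Omega>"
        using r(2) that by blast
      then show ?thesis
        using U(3) by simp
    qed
  qed (use nz in simp)
  then show "\<forall>\<^sub>F z in nhds 0. f (c + sc z v) = f c"
    using eventually_nhds_in_open[of "ball 0 r" 0] r(1) by (auto elim!: eventually_mono)
qed

lemma locally_constant_on_lines_along_segment:
  assumes \<Omega>: "two_open sc \<Omega>" and G: "G_holomorphic sc \<Omega> f"
    and p: "locally_constant_on_lines sc f k p" and seg: "cseg sc p q \<subseteq> \<Omega>"
  shows "locally_constant_on_lines sc f k q"
  unfolding locally_constant_on_lines_def
proof
  fix w
  define u where "u = q - p"
  let ?D = "{P. p + sc (fst P) u + sc (snd P) w \<in> \<Omega>}"
  have segment_in: "(z, 0) \<in> ?D" if "z \<in> closed_segment 0 1" for z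
    using that seg unfolding cseg_def u_def closed_segment_def
    by (auto simp: scaleR_conv_of_real)
  obtain e where e: "e > 0" "\<And>t z. norm t < e \<Longrightarrow> z \<in> closed_segment 0 1 \<Longrightarrow> (z, z * t) \<in> ?D"
    using tube_around_unit_segment[OF two_open_imp_open_plane_preimage[OF \<Omega>] segment_in] by blast
  have "f (q + sc t w) = k" if t: "norm t < e" for t
  proof -
    define v where "v = u + sc t w"
    have "closed_segment 0 1 \<subseteq> {z. p + sc z v \<in> \<Omega>}"
      using e(2)[OF t] by (auto simp: v_def V.scale_right_distrib add.assoc)
    then have "1 \<in> connected_component_set {z. p + sc z v \<in> \<Omega>} 0"
      by (rule closed_segment_subset_connected_component)
    moreover have "\<forall>\<^sub>F z in nhds 0. f (p + sc z v) = k"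
      using p unfolding locally_constant_on_lines_def by blast
    moreover have "line_open sc \<Omega>"
      using \<Omega> by (simp add: two_open_def)
    ultimately have "f (p + sc 1 v) = k"
      using G_holomorphic_constant_on_line_component[OF _ G] by blast
    then show ?thesis
      by (simp add: v_def u_def add.assoc)
  qed
  then show "\<forall>\<^sub>F t in nhds 0. f (q + sc t w) = k"
    using eventually_nhds_in_open[of "ball 0 e" 0] e(1) by (auto elim!: eventually_mono)
qed

lemma locally_constant_on_lines_along_polygon:
  assumes \<Omega>: "two_open sc \<Omega>" and G: "G_holomorphic sc \<Omega> f" and "ps \<noteq> []"
    and hd: "locally_constant_on_lines sc f k (hd ps)"
    and segs: "\<And>i. Suc i < length ps \<Longrightarrow> cseg sc (ps ! i) (ps ! Suc i) \<subseteq> \<Omega>"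
  shows "locally_constant_on_lines sc f k (last ps)"
proof -
  have "locally_constant_on_lines sc f k (ps ! i)" if "i < length ps" for i
    using that
  proof (induction i)
    case 0
    then show ?case using hd by (simp add: hd_conv_nth)
  next
    case (Suc i)
    then show ?case
      using locally_constant_on_lines_along_segment[OF \<Omega> G _ segs] by simp
  qed
  then show ?thesis
    using \<open>ps \<noteq> []\<close> by (simp add: last_conv_nth)
qed

end

theorem mainTheorem7:
  fixes sc :: "complex \<Rightarrow> 'a::ab_group_add \<Rightarrow> 'a"
    and \<Omega> :: "'a set" and f :: "'a \<Rightarrow> complex" and c :: 'a
  assumes "vector_space sc"
    and "\<exists>u v. u \<noteq> v \<and> \<not> module.dependent sc {u, v}"
    and "two_open sc \<Omega>"
    and "polygonally_connected sc \<Omega>"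
    and "G_holomorphic sc \<Omega> f"
    and "c \<in> \<Omega>"
    and "tau1_local_min_abs sc \<Omega> f c"
    and "f c \<noteq> 0"
  shows "\<exists>k. \<forall>x\<in>\<Omega>. f x = k"
proof (intro exI ballI)
  fix x
  assume "x \<in> \<Omega>"
  then obtain ps where ps: "ps \<noteq> []" "hd ps = c" "last ps = x"
    "\<And>i. Suc i < length ps \<Longrightarrow> cseg sc (ps ! i) (ps ! Suc i) \<subseteq> \<Omega>"
    using assms(4,6) unfolding polygonally_connected_def by blast
  have "line_open sc \<Omega>"
    using assms(3) by (simp add: two_open_def)
  then have "locally_constant_on_lines sc f (f c) c"
    by (rule tau1_local_min_imp_locally_constant_on_lines[OF assms(1) _ assms(5-8)])
  then have "locally_constant_on_lines sc f (f c) x"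
    using locally_constant_on_lines_along_polygon[OF assms(1,3,5) ps(1) _ ps(4)] ps(2,3) by simp
  then show "f x = f c"
    by (rule locally_constant_on_lines_imp_eq[OF assms(1)])
qed

end
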